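(* Let $f:\{-1,1\}^k\to\{0,1\}$, $\delta\in(0,1)$, and let $\Lambda^*$ be a probability measure on $\mathcal{C}^*_\delta(f)$ such that for every $t\in[k]$ the signed measure $\mathbb{E}_{|S|=t}\mathbb{E}_{\pi:S\to S}\mathbb{E}_{b\in\{-1,1\}^{|S|}}[(\prod_{i\in S}b_i)\hat f(S)\Lambda^*_{S,\pi,b}]$ is identically zero. For every $\varepsilon>0$ there exists a sufficiently large constant $\Delta(\varepsilon)$ such that, with high probability (as $n\to\infty$) over the random instance $\Phi$ of MAX k-CSP$(f)$ generated as described below with $m=\Delta(\varepsilon)n$ constraints, every assignment $\psi$ to $\Phi$ satisfies $\mathrm{sat}(\psi)\in[\rho(f)-\varepsilon,\rho(f)+\varepsilon]$.
   Context: $\rho(f)=|f^{-1}(1)|/2^k$, $\hat f(S)$ the Fourier coefficients of $f$. $\mathcal{C}^*(f)\subseteq\mathbb{R}^k$ is the set of first-moment vectors $(\mathbb{E}_\nu x_1,\dots,\mathbb{E}_\nu x_k)$ of distributions $\nu$ on $f^{-1}(1)$, and $\mathcal{C}^*_\delta(f)=\{(1-\delta)\zeta:\zeta\in\mathcal{C}^*(f)\}$. $\Lambda^*_{S,\pi,b}$ is the law of the vector obtained from $\zeta\sim\Lambda^*$ by restricting to coordinates $S$, permuting by $\pi$ and multiplying coordinatewise by $b$; $S$ (of size $t$), $\pi$, $b$ uniform. Random instance: let $s=\lceil1/\varepsilon\rceil$; partition $[0,1]$ into $I_0=\{0\}$ and contiguous equal-length intervals $I_1,\dots,I_s$ partitioning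 $(0,1]$, each open at the left endpoint and closed at the right. For each $i\in\{0,\dots,s\}$ there is a layer $X_i$ of $n$ Boolean variables. One constraint is generated by: sample $\zeta\sim\Lambda^*$; for each $j\in[k]$ let $i_j$ be the index of the interval containing $|\zeta(j)|$ and pick a uniformly random variable from $X_{i_j}$; negate it if $\zeta(j)<0$, and with probability $1/2$ if $\zeta(j)=0$; impose $f$ on these $k$ literals. This is repeated independently $m$ times. $\mathrm{sat}(\psi)$ is the fraction of constraints satisfied by the $\pm1$ assignment $\psi$. *)

theory Defs
  imports "HOL-Probability.Probability" "HOL-Combinatorics.Permutations"
begin

(* Points of {-1,1}^k: functions on {..<k} (extensional, undefined outside). *)
definition cube :: "nat \<Rightarrow> (nat \<Rightarrow> real) set" where
  "cube k = PiE {..<k} (\<lambda>_. {-1, 1})"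

(* f : {-1,1}^k -> {0,1} is encoded as a predicate (True = 1). *)
definition rho :: "nat \<Rightarrow> ((nat \<Rightarrow> real) \<Rightarrow> bool) \<Rightarrow> real" where
  "rho k f = real (card {x \<in> cube k. f x}) / 2 ^ k"

definition fhat :: "nat \<Rightarrow> ((nat \<Rightarrow> real) \<Rightarrow> bool) \<Rightarrow> nat set \<Rightarrow> real" where
  "fhat k f S = (\<Sum>x\<in>cube k. of_bool (f x) * (\<Prod>i\<in>S. x i)) / 2 ^ k"

definition Cstar :: "nat \<Rightarrow> ((nat \<Rightarrow> real) \<Rightarrow> bool) \<Rightarrow> (nat \<Rightarrow> real) set" where
  "Cstar k f = {\<zeta> \<in> extensional {..<k}. \<exists>\<nu> :: (nat \<Rightarrow> real) pmf.
      set_pmf \<nu> \<subseteq> {x \<in> cube k. f x} \<and>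
      (\<forall>j<k. \<zeta> j = measure_pmf.expectation \<nu> (\<lambda>x. x j))}"

definition Cstar_delta :: "nat \<Rightarrow> ((nat \<Rightarrow> real) \<Rightarrow> bool) \<Rightarrow> real \<Rightarrow> (nat \<Rightarrow> real) set" where
  "Cstar_delta k f \<delta> = (\<lambda>\<zeta>. \<lambda>j\<in>{..<k}. (1 - \<delta>) * \<zeta> j) ` Cstar k f"

(* Lambda^*_{S,pi,b}: restrict zeta to S, permute by pi, multiply by b; the result
   (indexed by S) is identified with a vector in R^t, t = |S|, via the increasing
   enumeration of S. *)
definition proj_vec :: "nat set \<Rightarrow> (nat \<Rightarrow> nat) \<Rightarrow> (nat \<Rightarrow> real) \<Rightarrow> (nat \<Rightarrow> real) \<Rightarrow> (nat \<Rightarrow> real)" where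
  "proj_vec S \<pi> b \<zeta> = (\<lambda>j\<in>{..<card S}.
      let s = sorted_list_of_set S ! j in b s * \<zeta> (\<pi> s))"

definition signed_avg :: "nat \<Rightarrow> ((nat \<Rightarrow> real) \<Rightarrow> bool) \<Rightarrow> (nat \<Rightarrow> real) measure
     \<Rightarrow> nat \<Rightarrow> (nat \<Rightarrow> real) set \<Rightarrow> real" where
  "signed_avg k f \<Lambda> t A =
     (\<Sum>S\<in>{S. S \<subseteq> {..<k} \<and> card S = t}.
       (\<Sum>\<pi>\<in>{\<pi>. \<pi> permutes S}.
         (\<Sum>b\<in>PiE S (\<lambda>_. {-1, 1}).
            (\<Prod>i\<in>S. b i) * fhat k f S *
            measure \<Lambda> {\<zeta> \<in> space \<Lambda>. proj_vec S \<pi> b \<zeta> \<in> A}) / 2 ^ t)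
       / fact t) / real (k choose t)"

definition interval :: "nat \<Rightarrow> nat \<Rightarrow> real set" where
  "interval s i = (if i = 0 then {0} else {(real i - 1) / real s <.. real i / real s})"

definition layer :: "nat \<Rightarrow> real \<Rightarrow> nat" where
  "layer s a = (THE i. i \<le> s \<and> a \<in> interval s i)"

(* A literal is (layer index, variable index within layer, negated?).
   Probability that coordinate value z produces literal c, with n variables per layer. *)
definition lit_prob :: "nat \<Rightarrow> nat \<Rightarrow> real \<Rightarrow> nat \<times> nat \<times> bool \<Rightarrow> real" where
  "lit_prob n s z c = (case c of (i, v, neg) \<Rightarrow>
      of_bool (i = layer s \<bar>z\<bar>) * (if v < n then 1 / real n else 0) *
      (if z < 0 then of_bool neg else if z > 0 then of_bool (\<not> neg) else 1 / 2))"

definition constraints :: "nat \<Rightarrow> nat \<Rightarrow> nat \<Rightarrow> (nat \<Rightarrow> nat \<times> nat \<times> bool) set" where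
  "constraints k n s = PiE {..<k} (\<lambda>_. {..s} \<times> {..<n} \<times> UNIV)"

definition constraint_prob :: "nat \<Rightarrow> (nat \<Rightarrow> real) measure \<Rightarrow> nat \<Rightarrow> nat
     \<Rightarrow> (nat \<Rightarrow> nat \<times> nat \<times> bool) \<Rightarrow> real" where
  "constraint_prob k \<Lambda> n s c = (\<integral>\<zeta>. (\<Prod>j<k. lit_prob n s (\<zeta> j) (c j)) \<partial>\<Lambda>)"

(* constraint c satisfied by the \<plusminus>1 assignment psi (variables are pairs (layer, index)) *)
definition satisfied :: "nat \<Rightarrow> ((nat \<Rightarrow> real) \<Rightarrow> bool) \<Rightarrow> (nat \<times> nat \<Rightarrow> real)
     \<Rightarrow> (nat \<Rightarrow> nat \<times> nat \<times> bool) \<Rightarrow> bool" where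
  "satisfied k f \<psi> c = f (\<lambda>j\<in>{..<k}. case c j of (i, v, neg) \<Rightarrow>
      (if neg then -1 else 1) * \<psi> (i, v))"

definition sat :: "nat \<Rightarrow> ((nat \<Rightarrow> real) \<Rightarrow> bool) \<Rightarrow> (nat \<Rightarrow> nat \<times> nat \<times> bool) list
     \<Rightarrow> (nat \<times> nat \<Rightarrow> real) \<Rightarrow> real" where
  "sat k f \<Phi> \<psi> = (\<Sum>c\<leftarrow>\<Phi>. of_bool (satisfied k f \<psi> c)) / real (length \<Phi>)"

definition instance_prob :: "nat \<Rightarrow> (nat \<Rightarrow> real) measure \<Rightarrow> nat \<Rightarrow> nat \<Rightarrow> nat
     \<Rightarrow> ((nat \<Rightarrow> nat \<times> nat \<times> bool) list \<Rightarrow> bool) \<Rightarrow> real" where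
  "instance_prob k \<Lambda> n s m E =
     (\<Sum>\<Phi>\<in>{\<Phi>. set \<Phi> \<subseteq> constraints k n s \<and> length \<Phi> = m}.
        of_bool (E \<Phi>) * (\<Prod>c\<leftarrow>\<Phi>. constraint_prob k \<Lambda> n s c))"

end

theory Submission
  imports Defs
begin

text \<open>Fix a \<open>\<plusminus>1\<close> assignment \<open>\<psi>\<close> and let \<open>\<mu>(z)\<close> (\<open>literal_mean\<close>) be the expected value of the
  literal drawn for a coordinate value \<open>z\<close>: the sign of \<open>z\<close> times the average of \<open>\<psi>\<close> over the layer
  of \<open>\<bar>z\<bar>\<close>. Expanding \<open>f\<close> in the Fourier basis, a random constraint is satisfied by \<open>\<psi>\<close> with
  probability \<open>\<Sum>S. fhat S * E[\<Prod>j\<in>S. \<mu>(\<zeta> j)]\<close>. Since \<open>\<mu>\<close> is odd and takes finitely many values, the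
  part of this sum with \<open>card S = t\<close> is the integral of a simple function against the signed measure
  of the hypothesis, hence vanishes for \<open>t \<ge> 1\<close>: every assignment satisfies a \<open>\<rho>(f)\<close> fraction of
  the constraints in expectation. Hoeffding's inequality and a union bound over the \<open>2^((s+1)n)\<close>
  relevant assignments give concentration once \<open>m = \<Delta> n\<close> with \<open>\<Delta>\<close> large enough.\<close>

section \<open>Independent draws from a finite distribution\<close>

lemma lists_of_length_Suc:
  "{\<Phi>. set \<Phi> \<subseteq> D \<and> length \<Phi> = Suc m}
     = (\<lambda>(c, \<Phi>). c # \<Phi>) ` (D \<times> {\<Phi>. set \<Phi> \<subseteq> D \<and> length \<Phi> = m})"
proof (rule set_eqI, rule iffI)
  fix x assume "x \<in> {\<Phi>. set \<Phi> \<subseteq> D \<and> length \<Phi> = Suc m}"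
  then obtain c xs where "x = c # xs" "set (c # xs) \<subseteq> D" "length xs = m"
    by (cases x) auto
  then show "x \<in> (\<lambda>(c, \<Phi>). c # \<Phi>) ` (D \<times> {\<Phi>. set \<Phi> \<subseteq> D \<and> length \<Phi> = m})"
    by (auto intro!: image_eqI[where x="(c, xs)"])
qed auto

lemma sum_prod_list_lists_of_length:
  fixes g :: "'a \<Rightarrow> 'b::comm_semiring_1"
  assumes "finite D"
  shows "(\<Sum>\<Phi>\<in>{\<Phi>. set \<Phi> \<subseteq> D \<and> length \<Phi> = m}. \<Prod>c\<leftarrow>\<Phi>. g c) = (\<Sum>c\<in>D. g c) ^ m"
proof (induction m)
  case 0
  have "{\<Phi>. set \<Phi> \<subseteq> D \<and> length \<Phi> = 0} = {[]}" by auto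
  then show ?case by simp
next
  case (Suc m)
  let ?L = "{\<Phi>. set \<Phi> \<subseteq> D \<and> length \<Phi> = m}"
  have "inj_on (\<lambda>(c, \<Phi>). c # \<Phi>) (D \<times> ?L)"
    by (auto simp: inj_on_def)
  then have "(\<Sum>\<Phi>\<in>{\<Phi>. set \<Phi> \<subseteq> D \<and> length \<Phi> = Suc m}. \<Prod>c\<leftarrow>\<Phi>. g c)
      = (\<Sum>(c, \<Phi>)\<in>D \<times> ?L. g c * (\<Prod>c\<leftarrow>\<Phi>. g c))"
    unfolding lists_of_length_Suc by (subst sum.reindex) (simp_all add: case_prod_beta)
  also have "\<dots> = (\<Sum>c\<in>D. g c * (\<Sum>\<Phi>\<in>?L. \<Prod>c\<leftarrow>\<Phi>. g c))"
    by (subst sum.cartesian_product[symmetric]) (simp add: sum_distrib_left)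
  also have "\<dots> = (\<Sum>c\<in>D. g c) ^ Suc m"
    by (simp add: Suc sum_distrib_right)
  finally show ?case .
qed

lemma exp_sum_list: "exp (\<Sum>c\<leftarrow>\<Phi>. g c) = (\<Prod>c\<leftarrow>\<Phi>. exp (g c :: real))"
  by (induction \<Phi>) (simp_all add: exp_add)

lemma prod_list_mult_distrib:
  fixes g h :: "'a \<Rightarrow> 'b::comm_monoid_mult"
  shows "(\<Prod>c\<leftarrow>\<Phi>. g c * h c) = (\<Prod>c\<leftarrow>\<Phi>. g c) * (\<Prod>c\<leftarrow>\<Phi>. h c)"
  by (induction \<Phi>) (simp_all add: mult_ac)

locale finite_distribution =
  fixes D :: "'a set" and p :: "'a \<Rightarrow> real"
  assumes finite_support: "finite D"
    and nonneg: "\<And>c. c \<in> D \<Longrightarrow> 0 \<le> p c"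
    and sum_eq_1: "(\<Sum>c\<in>D. p c) = 1"
begin

definition mean :: "('a \<Rightarrow> real) \<Rightarrow> real" where
  "mean X = (\<Sum>c\<in>D. p c * X c)"

definition iid_prob :: "nat \<Rightarrow> ('a list \<Rightarrow> bool) \<Rightarrow> real" where
  "iid_prob m E = (\<Sum>\<Phi>\<in>{\<Phi>. set \<Phi> \<subseteq> D \<and> length \<Phi> = m}. of_bool (E \<Phi>) * (\<Prod>c\<leftarrow>\<Phi>. p c))"

lemma mean_one_minus: "mean (\<lambda>c. 1 - X c) = 1 - mean X"
  by (simp add: mean_def right_diff_distrib sum_subtractf sum_eq_1)

lemma prod_list_nonneg_draws: "set \<Phi> \<subseteq> D \<Longrightarrow> 0 \<le> (\<Prod>c\<leftarrow>\<Phi>. p c)"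
  using nonneg by (intro prod_list_nonneg) auto

lemma iid_prob_mono:
  assumes "\<And>\<Phi>. set \<Phi> \<subseteq> D \<Longrightarrow> length \<Phi> = m \<Longrightarrow> E \<Phi> \<Longrightarrow> E' \<Phi>"
  shows "iid_prob m E \<le> iid_prob m E'"
  unfolding iid_prob_def using assms prod_list_nonneg_draws
  by (intro sum_mono mult_right_mono) auto

lemma iid_prob_nonneg: "0 \<le> iid_prob m E"
  unfolding iid_prob_def using prod_list_nonneg_draws by (intro sum_nonneg) auto

lemma iid_prob_True: "iid_prob m (\<lambda>_. True) = 1"
  using sum_prod_list_lists_of_length[OF finite_support, of p m] by (simp add: iid_prob_def sum_eq_1)

lemma iid_prob_not: "iid_prob m (\<lambda>\<Phi>. \<not> E \<Phi>) = 1 - iid_prob m E"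
  unfolding iid_prob_True[symmetric, of m] iid_prob_def
  by (simp add: sum_subtractf[symmetric]) (intro sum.cong refl, simp)

lemma iid_prob_le_1: "iid_prob m E \<le> 1"
  using iid_prob_not[of m E] iid_prob_nonneg[of m "\<lambda>\<Phi>. \<not> E \<Phi>"] by simp

lemma iid_prob_union_bound:
  assumes "finite \<Psi>"
  shows "iid_prob m (\<lambda>\<Phi>. \<exists>\<psi>\<in>\<Psi>. E \<psi> \<Phi>) \<le> (\<Sum>\<psi>\<in>\<Psi>. iid_prob m (E \<psi>))"
proof -
  have "of_bool (\<exists>\<psi>\<in>\<Psi>. E \<psi> \<Phi>) \<le> (\<Sum>\<psi>\<in>\<Psi>. of_bool (E \<psi> \<Phi>) :: real)" for \<Phi>
  proof (cases "\<exists>\<psi>\<in>\<Psi>. E \<psi> \<Phi>")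
    case True
    then obtain \<psi> where "\<psi> \<in> \<Psi>" "E \<psi> \<Phi>" by blast
    then show ?thesis using member_le_sum[OF _ _ assms, of \<psi> "\<lambda>\<psi>. of_bool (E \<psi> \<Phi>) :: real"] by simp
  qed (simp add: sum_nonneg)
  then have "iid_prob m (\<lambda>\<Phi>. \<exists>\<psi>\<in>\<Psi>. E \<psi> \<Phi>)
      \<le> (\<Sum>\<Phi>\<in>{\<Phi>. set \<Phi> \<subseteq> D \<and> length \<Phi> = m}. \<Sum>\<psi>\<in>\<Psi>. of_bool (E \<psi> \<Phi>) * (\<Prod>c\<leftarrow>\<Phi>. p c))"
    unfolding iid_prob_def sum_distrib_right[symmetric] using prod_list_nonneg_draws
    by (intro sum_mono mult_right_mono) auto
  also have "\<dots> = (\<Sum>\<psi>\<in>\<Psi>. iid_prob m (E \<psi>))"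
    unfolding iid_prob_def by (rule sum.swap)
  finally show ?thesis .
qed

lemma iid_prob_disj: "iid_prob m (\<lambda>\<Phi>. E \<Phi> \<or> E' \<Phi>) \<le> iid_prob m E + iid_prob m E'"
  unfolding iid_prob_def sum.distrib[symmetric] distrib_right[symmetric] using prod_list_nonneg_draws
  by (intro sum_mono mult_right_mono) auto

lemma hoeffding_lemma:
  assumes X: "\<And>c. c \<in> D \<Longrightarrow> X c \<in> {0..1}" and l: "l > 0"
  shows "(\<Sum>c\<in>D. p c * exp (l * (X c - mean X))) \<le> exp (l\<^sup>2 / 8)"
proof -
  define q where "q = (\<lambda>c. if c \<in> D then p c else 0)"
  have q_nonneg: "\<And>c. 0 \<le> q c" using nonneg by (auto simp: q_def)
  have "(\<integral>\<^sup>+c. ennreal (q c) \<partial>count_space UNIV) = (\<Sum>c\<in>D. ennreal (p c))"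
    using finite_support
    by (subst nn_integral_count_space'[where A=D]) (auto simp: q_def)
  also have "\<dots> = 1" using nonneg by (simp add: sum_ennreal sum_eq_1)
  finally have q_sum: "(\<integral>\<^sup>+c. ennreal (q c) \<partial>count_space UNIV) = 1" .
  define P where "P = embed_pmf q"
  have pmf_P: "pmf P c = q c" for c unfolding P_def by (rule pmf_embed_pmf[OF q_nonneg q_sum])
  have set_P: "set_pmf P \<subseteq> D" using pmf_P by (auto simp: set_pmf_eq q_def)
  interpret interval_bounded_random_variable "measure_pmf P" X 0 1
    by unfold_locales (use set_P X in \<open>auto simp: AE_measure_pmf_iff\<close>)
  have E: "measure_pmf.expectation P X = mean X"
    using set_P by (subst integral_measure_pmf_real[OF finite_support]) (auto simp: pmf_P q_def mean_def mult.commute)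
  have "ennreal (\<Sum>c\<in>D. p c * exp (l * (X c - mean X)))
      = (\<integral>\<^sup>+c. ennreal (exp (l * (X c - measure_pmf.expectation P X))) \<partial>measure_pmf P)"
    using set_P nonneg
    by (subst nn_integral_measure_pmf_support[OF finite_support])
       (auto simp: E pmf_P q_def sum_ennreal[symmetric] ennreal_mult'' mult.commute intro!: sum.cong)
  also have "\<dots> \<le> ennreal (exp (l\<^sup>2 * (1 - 0)\<^sup>2 / 8))"
    by (rule Hoeffdings_lemma_nn_integral[OF l])
  finally show ?thesis by (subst (asm) ennreal_le_iff) auto
qed

lemma iid_prob_upper_tail:
  assumes X: "\<And>c. c \<in> D \<Longrightarrow> X c \<in> {0..1}" and e: "e > 0"
  shows "iid_prob m (\<lambda>\<Phi>. real m * (mean X + e) \<le> (\<Sum>c\<leftarrow>\<Phi>. X c)) \<le> exp (- 2 * real m * e\<^sup>2)"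
proof -
  define l where "l = 4 * e" \<comment> \<open>minimises \<open>- l m e + m l\<^sup>2 / 8\<close>\<close>
  have l: "l > 0" using e by (simp add: l_def)
  let ?L = "{\<Phi>. set \<Phi> \<subseteq> D \<and> length \<Phi> = m}"
  have Chernoff: "of_bool (real m * (mean X + e) \<le> (\<Sum>c\<leftarrow>\<Phi>. X c)) * (\<Prod>c\<leftarrow>\<Phi>. p c)
      \<le> exp (- l * real m * e) * (\<Prod>c\<leftarrow>\<Phi>. p c * exp (l * (X c - mean X)))"
    if \<Phi>: "\<Phi> \<in> ?L" for \<Phi>
  proof -
    define T where "T = (\<Sum>c\<leftarrow>\<Phi>. X c) - real m * (mean X + e)"
    have "(\<Sum>c\<leftarrow>\<Phi>. l * (X c - mean X)) = l * T + l * real m * e"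
      using \<Phi> by (simp add: T_def sum_list_const_mult sum_list_subtractf sum_list_triv algebra_simps)
    then have "(\<Prod>c\<leftarrow>\<Phi>. p c * exp (l * (X c - mean X))) = (\<Prod>c\<leftarrow>\<Phi>. p c) * exp (l * T + l * real m * e)"
      by (simp add: prod_list_mult_distrib exp_sum_list[symmetric])
    moreover have "exp (- l * real m * e) * exp (l * T + l * real m * e) = exp (l * T)"
      by (simp add: mult_exp_exp)
    ultimately have eq: "exp (- l * real m * e) * (\<Prod>c\<leftarrow>\<Phi>. p c * exp (l * (X c - mean X)))
        = exp (l * T) * (\<Prod>c\<leftarrow>\<Phi>. p c)"
      by (metis mult.commute mult.left_commute)
    have "of_bool (0 \<le> T) \<le> exp (l * T)"
      using l by (cases "0 \<le> T") auto
    then show ?thesis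
      unfolding eq using prod_list_nonneg_draws[of \<Phi>] \<Phi> by (simp add: T_def mult_right_mono)
  qed
  have "iid_prob m (\<lambda>\<Phi>. real m * (mean X + e) \<le> (\<Sum>c\<leftarrow>\<Phi>. X c))
      \<le> exp (- l * real m * e) * (\<Sum>\<Phi>\<in>?L. \<Prod>c\<leftarrow>\<Phi>. p c * exp (l * (X c - mean X)))"
    unfolding iid_prob_def sum_distrib_left by (intro sum_mono Chernoff)
  also have "\<dots> = exp (- l * real m * e) * (\<Sum>c\<in>D. p c * exp (l * (X c - mean X))) ^ m"
    by (simp add: sum_prod_list_lists_of_length[OF finite_support])
  also have "\<dots> \<le> exp (- l * real m * e) * exp (l\<^sup>2 / 8) ^ m"
    using hoeffding_lemma[OF X l] nonneg
    by (intro mult_left_mono power_mono) (auto intro!: sum_nonneg)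
  also have "\<dots> = exp (- 2 * real m * e\<^sup>2)"
    by (simp add: exp_of_nat_mult[symmetric] mult_exp_exp l_def power2_eq_square algebra_simps)
  finally show ?thesis .
qed

lemma iid_prob_mean_deviation:
  assumes X: "\<And>c. c \<in> D \<Longrightarrow> X c \<in> {0..1}" and e: "e > 0" and m: "m > 0"
  shows "iid_prob m (\<lambda>\<Phi>. (\<Sum>c\<leftarrow>\<Phi>. X c) / real m \<notin> {mean X - e .. mean X + e})
    \<le> 2 * exp (- 2 * real m * e\<^sup>2)"
proof -
  have X': "\<And>c. c \<in> D \<Longrightarrow> 1 - X c \<in> {0..1}" using X by auto
  have "iid_prob m (\<lambda>\<Phi>. (\<Sum>c\<leftarrow>\<Phi>. X c) / real m \<notin> {mean X - e .. mean X + e})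
      \<le> iid_prob m (\<lambda>\<Phi>. real m * (mean X + e) \<le> (\<Sum>c\<leftarrow>\<Phi>. X c)
          \<or> real m * (mean (\<lambda>c. 1 - X c) + e) \<le> (\<Sum>c\<leftarrow>\<Phi>. 1 - X c))"
    using m by (intro iid_prob_mono)
      (auto simp: mean_one_minus sum_list_subtractf sum_list_triv field_simps)
  also have "\<dots> \<le> exp (- 2 * real m * e\<^sup>2) + exp (- 2 * real m * e\<^sup>2)"
    using iid_prob_upper_tail[OF X e] iid_prob_upper_tail[OF X' e]
    by (intro order.trans[OF iid_prob_disj] add_mono)
  finally show ?thesis by simp
qed

end

section \<open>Layers and literals\<close>

lemma layer_interval_iff:
  assumes s: "s > 0" and a: "0 \<le> a" "a \<le> 1"
  shows "i \<le> s \<and> a \<in> interval s i \<longleftrightarrow> i = nat \<lceil>a * real s\<rceil>"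
proof -
  define x where "x = a * real s"
  have x: "0 \<le> x" "x \<le> real s"
    using a s by (simp_all add: x_def mult_left_le_one_le)
  have "a \<in> interval s i \<longleftrightarrow> (if i = 0 then x = 0 else real i - 1 < x \<and> x \<le> real i)"
    using s by (simp add: interval_def divide_less_eq le_divide_eq x_def)
  also have "\<dots> \<longleftrightarrow> i = nat \<lceil>x\<rceil>"
  proof (cases "i = 0")
    case True
    then show ?thesis using x by (auto simp: eq_commute[of 0] nat_eq_iff ceiling_eq_iff)
  next
    case False
    then have "i = nat \<lceil>x\<rceil> \<longleftrightarrow> \<lceil>x\<rceil> = int i" by linarith
    then show ?thesis using False by (simp add: ceiling_eq_iff)
  qed
  moreover have "nat \<lceil>x\<rceil> \<le> s"
    using x by (simp add: nat_le_iff ceiling_le_iff)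
  ultimately show ?thesis
    unfolding x_def by blast
qed

lemma layer_eq_ceiling:
  assumes "s > 0" "0 \<le> a" "a \<le> 1"
  shows "layer s a = nat \<lceil>a * real s\<rceil>"
  unfolding layer_def layer_interval_iff[OF assms] by simp

lemma layer_le:
  assumes "s > 0" "0 \<le> a" "a \<le> 1"
  shows "layer s a \<le> s"
  using layer_interval_iff[OF assms] layer_eq_ceiling[OF assms] by blast

lemma layer_outside:
  assumes "\<not> (0 \<le> a \<and> a \<le> (1::real))"
  shows "layer s a = (THE i::nat. False)"
proof -
  have "\<not> (i \<le> s \<and> a \<in> interval s i)" for i
  proof
    assume i: "i \<le> s \<and> a \<in> interval s i"
    show False
    proof (cases "i = 0")
      case True then show False using i assms by (simp add: interval_def)
    next
      case False
      then have "(real i - 1) / real s < a" "a \<le> real i / real s" using i by (simp_all add: interval_def)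
      moreover have "0 \<le> (real i - 1) / real s" using False by simp
      moreover have "real i / real s \<le> 1" using i by (cases "s = 0") (simp_all add: divide_le_eq)
      ultimately show False using assms by linarith
    qed
  qed
  then have "(\<lambda>i. i \<le> s \<and> a \<in> interval s i) = (\<lambda>i. False)" by blast
  then show ?thesis unfolding layer_def by simp
qed

lemma measurable_layer [measurable]:
  assumes "s > 0"
  shows "layer s \<in> measurable borel (count_space UNIV)"
proof -
  have "layer s = (\<lambda>a. if 0 \<le> a \<and> a \<le> 1 then nat \<lceil>a * real s\<rceil> else (THE i::nat. False))"
    using layer_eq_ceiling[OF assms] layer_outside by auto
  then show ?thesis by simp
qed

lemma range_layer:
  assumes "s > 0"
  shows "range (layer s) \<subseteq> insert (THE i::nat. False) {..s}"
proof
  fix i assume "i \<in> range (layer s)"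
  then obtain a where "i = layer s a" by blast
  then show "i \<in> insert (THE i::nat. False) {..s}"
    using layer_le[OF assms, of a] layer_outside[of a s] by (cases "0 \<le> a \<and> a \<le> 1") auto
qed

definition layer_mean :: "nat \<Rightarrow> (nat \<times> nat \<Rightarrow> real) \<Rightarrow> nat \<Rightarrow> real" where
  "layer_mean n \<psi> i = (\<Sum>v<n. \<psi> (i, v)) / real n"

definition literal_mean :: "nat \<Rightarrow> nat \<Rightarrow> (nat \<times> nat \<Rightarrow> real) \<Rightarrow> real \<Rightarrow> real" where
  "literal_mean n s \<psi> z = sgn z * layer_mean n \<psi> (layer s \<bar>z\<bar>)"

definition literal_value :: "(nat \<times> nat \<Rightarrow> real) \<Rightarrow> nat \<times> nat \<times> bool \<Rightarrow> real" where
  "literal_value \<psi> l = (case l of (i, v, neg) \<Rightarrow> (if neg then -1 else 1) * \<psi> (i, v))"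

lemma sum_literals:
  fixes G :: "nat \<times> nat \<times> bool \<Rightarrow> real"
  shows "(\<Sum>l\<in>{..s} \<times> {..<n} \<times> UNIV. G l) = (\<Sum>i\<le>s. \<Sum>v<n. G (i, v, True) + G (i, v, False))"
proof -
  have "(\<Sum>l\<in>{..s} \<times> {..<n} \<times> UNIV. G l) = (\<Sum>i\<le>s. \<Sum>v<n. \<Sum>b\<in>UNIV. G (i, v, b))"
    by (simp add: sum.cartesian_product case_prod_beta)
  then show ?thesis by (simp add: UNIV_bool add.commute)
qed

lemma sum_lit_prob_affine:
  assumes s: "s > 0" and n: "n > 0" and z: "\<bar>z\<bar> \<le> 1"
  shows "(\<Sum>l\<in>{..s} \<times> {..<n} \<times> UNIV. lit_prob n s z l * ((1 + a * literal_value \<psi> l) / 2))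
       = (1 + a * literal_mean n s \<psi> z) / 2"
proof -
  define L where "L = layer s \<bar>z\<bar>"
  have L: "L \<le> s" unfolding L_def using layer_le[OF s, of "\<bar>z\<bar>"] z by simp
  define H where "H = (\<lambda>v neg. (1 / real n) *
      (if z < 0 then of_bool neg else if z > 0 then of_bool (\<not> neg) else 1 / 2) *
       ((1 + a * ((if neg then -1 else 1) * \<psi> (L, v))) / 2))"
  have "(\<Sum>l\<in>{..s} \<times> {..<n} \<times> UNIV. lit_prob n s z l * ((1 + a * literal_value \<psi> l) / 2))
      = (\<Sum>i\<le>s. if i = L then (\<Sum>v<n. H v True + H v False) else 0)"
    unfolding sum_literals
    by (intro sum.cong refl) (auto simp: lit_prob_def literal_value_def H_def L_def)
  also have "\<dots> = (\<Sum>v<n. H v True + H v False)"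
    using L by simp
  also have "\<dots> = (\<Sum>v<n. (1 / real n) * ((1 + a * sgn z * \<psi> (L, v)) / 2))"
    by (intro sum.cong refl) (auto simp: H_def sgn_if field_simps)
  also have "\<dots> = (1 + a * literal_mean n s \<psi> z) / 2"
    using n by (simp add: literal_mean_def layer_mean_def L_def sum.distrib sum_distrib_left[symmetric]
        sum_divide_distrib[symmetric] field_simps)
  finally show ?thesis .
qed

lemma sum_lit_prob:
  assumes "s > 0" "n > 0" "\<bar>z\<bar> \<le> 1"
  shows "(\<Sum>l\<in>{..s} \<times> {..<n} \<times> UNIV. lit_prob n s z l) = 1"
  using sum_lit_prob_affine[OF assms, of 0] by (simp add: sum_divide_distrib[symmetric])

lemma lit_prob_nonneg: "0 \<le> lit_prob n s z l"
  by (cases l) (simp add: lit_prob_def)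

lemma lit_prob_le_1: "n > 0 \<Longrightarrow> lit_prob n s z l \<le> 1"
  by (cases l) (simp add: lit_prob_def mult_le_one)

lemma measurable_lit_prob [measurable]:
  "s > 0 \<Longrightarrow> (\<lambda>z. lit_prob n s z l) \<in> borel_measurable borel"
  unfolding lit_prob_def by (cases l) simp

lemma measurable_literal_mean [measurable]:
  "s > 0 \<Longrightarrow> literal_mean n s \<psi> \<in> borel_measurable borel"
  unfolding literal_mean_def[abs_def] by measurable

lemma abs_layer_mean_le_1:
  assumes "\<forall>x. \<psi> x \<in> {-1, 1}" "n > 0"
  shows "\<bar>layer_mean n \<psi> i\<bar> \<le> 1"
proof -
  have "\<bar>\<Sum>v<n. \<psi> (i, v)\<bar> \<le> (\<Sum>v<n. \<bar>\<psi> (i, v)\<bar>)" by (rule sum_abs)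
  also have "\<dots> = real n"
  proof -
    have "\<bar>\<psi> (i, v)\<bar> = 1" for v using assms(1)[rule_format, of "(i, v)"] by auto
    then show ?thesis by simp
  qed
  finally show ?thesis using assms(2) by (simp add: layer_mean_def divide_le_eq)
qed

lemma abs_literal_mean_le_1:
  "\<forall>x. \<psi> x \<in> {-1, 1} \<Longrightarrow> n > 0 \<Longrightarrow> \<bar>literal_mean n s \<psi> z\<bar> \<le> 1"
  using abs_layer_mean_le_1[of \<psi> n "layer s \<bar>z\<bar>"]
  by (simp add: literal_mean_def abs_mult mult_le_one)

lemma literal_mean_sign_mult:
  "b \<in> {-1, 1} \<Longrightarrow> literal_mean n s \<psi> (b * z) = b * literal_mean n s \<psi> z"
  by (auto simp: literal_mean_def sgn_mult)

lemma finite_range_literal_mean: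
  assumes "s > 0"
  shows "finite (range (literal_mean n s \<psi>))"
proof (rule finite_subset)
  show "range (literal_mean n s \<psi>)
      \<subseteq> (\<lambda>(\<sigma>, i). \<sigma> * layer_mean n \<psi> i) ` ({-1, 0, 1} \<times> insert (THE i::nat. False) {..s})"
    using range_layer[OF assms] unfolding literal_mean_def
    by (intro image_subsetI image_eqI[where x="(sgn z, layer s \<bar>z\<bar>)" for z]) (auto simp: sgn_if)
qed auto

section \<open>Fourier expansion of a constraint\<close>

lemma finite_cube: "finite (cube k)"
  unfolding cube_def by (intro finite_PiE) auto

lemma prod_cube_agree:
  assumes x: "x \<in> cube k" and y: "y \<in> cube k"
  shows "(\<Prod>j<k. (1 + x j * y j) / 2) = of_bool (x = y)"
proof (cases "x = y")
  case True
  have "(1 + y j * y j) / 2 = 1" if "j < k" for j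
    using y that by (auto simp: cube_def PiE_def Pi_def)
  then show ?thesis using True by simp
next
  case False
  then obtain j where j: "x j \<noteq> y j" by auto
  have "j < k"
    using x y j PiE_arb[of _ "{..<k}"] unfolding cube_def by fastforce
  with x y have "x j \<in> {-1, 1}" "y j \<in> {-1, 1}"
    unfolding cube_def by (auto dest: PiE_mem)
  with j have "(1 + x j * y j) / 2 = 0" by auto
  then show ?thesis using False \<open>j < k\<close> by (simp add: prod_zero_iff) blast
qed

lemma of_bool_eq_sum_cube:
  assumes "y \<in> cube k"
  shows "of_bool (f y) = (\<Sum>x\<in>cube k. of_bool (f x) * (\<Prod>j<k. (1 + x j * y j) / 2) :: real)"
proof -
  have "(\<Sum>x\<in>cube k. of_bool (f x) * (\<Prod>j<k. (1 + x j * y j) / 2))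
      = (\<Sum>x\<in>cube k. if x = y then of_bool (f x) else (0::real))"
    using assms by (intro sum.cong refl) (simp add: prod_cube_agree)
  also have "\<dots> = of_bool (f y)"
    using assms finite_cube by (simp add: sum.delta')
  finally show ?thesis by simp
qed

lemma prod_affine_expand:
  fixes x m :: "nat \<Rightarrow> real"
  shows "(\<Prod>j<k. (1 + x j * m j) / 2) = (\<Sum>S\<in>Pow {..<k}. (\<Prod>j\<in>S. x j) * (\<Prod>j\<in>S. m j)) / 2 ^ k"
proof -
  have "(\<Prod>j<k. (1 + x j * m j) / 2) = (\<Prod>j<k. x j * m j + 1) / 2 ^ k"
    by (simp add: prod_dividef add.commute)
  also have "(\<Prod>j<k. x j * m j + 1) = (\<Sum>S\<in>Pow {..<k}. (\<Prod>j\<in>S. x j * m j) * (\<Prod>j\<in>{..<k} - S. 1))"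
    by (rule prod_add) simp
  finally show ?thesis by (simp add: prod.distrib)
qed

lemma sum_cube_prod_affine_eq_fourier:
  fixes m :: "nat \<Rightarrow> real"
  shows "(\<Sum>x\<in>cube k. of_bool (f x) * (\<Prod>j<k. (1 + x j * m j) / 2))
       = (\<Sum>S\<in>Pow {..<k}. fhat k f S * (\<Prod>j\<in>S. m j))"
proof -
  have "(\<Sum>x\<in>cube k. of_bool (f x) * (\<Prod>j<k. (1 + x j * m j) / 2))
      = (\<Sum>x\<in>cube k. \<Sum>S\<in>Pow {..<k}. of_bool (f x) * (\<Prod>j\<in>S. x j) / 2 ^ k * (\<Prod>j\<in>S. m j))"
    by (simp add: prod_affine_expand sum_distrib_left sum_divide_distrib mult.assoc)
  also have "\<dots> = (\<Sum>S\<in>Pow {..<k}. \<Sum>x\<in>cube k. of_bool (f x) * (\<Prod>j\<in>S. x j) / 2 ^ k * (\<Prod>j\<in>S. m j))"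
    by (rule sum.swap)
  also have "\<dots> = (\<Sum>S\<in>Pow {..<k}. fhat k f S * (\<Prod>j\<in>S. m j))"
    by (simp add: fhat_def sum_distrib_right sum_divide_distrib)
  finally show ?thesis .
qed

lemma fhat_empty: "fhat k f {} = rho k f"
  by (simp add: fhat_def rho_def sum.If_cases[symmetric] finite_cube Int_def)

lemma satisfied_eq_sum_cube:
  assumes "\<forall>x. \<psi> x \<in> {-1, 1}"
  shows "of_bool (satisfied k f \<psi> c)
    = (\<Sum>x\<in>cube k. of_bool (f x) * (\<Prod>j<k. (1 + x j * literal_value \<psi> (c j)) / 2) :: real)"
proof -
  define y where "y = (\<lambda>j\<in>{..<k}. literal_value \<psi> (c j))"
  have "literal_value \<psi> l \<in> {-1, 1}" for l
    using assms by (auto simp: literal_value_def split: prod.splits)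
  then have "y \<in> cube k" unfolding y_def cube_def by auto
  moreover have "satisfied k f \<psi> c = f y"
    unfolding satisfied_def y_def literal_value_def by simp
  ultimately show ?thesis
    using of_bool_eq_sum_cube[of y k f] by (simp add: y_def)
qed

lemma finite_constraints: "finite (constraints k n s)"
  unfolding constraints_def by (intro finite_PiE) auto

lemma sum_constraints_prod_lit_prob_affine:
  assumes "s > 0" "n > 0" "\<And>j. j < k \<Longrightarrow> \<bar>\<zeta> j\<bar> \<le> 1"
  shows "(\<Sum>c\<in>constraints k n s. (\<Prod>j<k. lit_prob n s (\<zeta> j) (c j))
            * (\<Prod>j<k. (1 + x j * literal_value \<psi> (c j)) / 2))
       = (\<Prod>j<k. (1 + x j * literal_mean n s \<psi> (\<zeta> j)) / 2)"
proof -
  have "(\<Sum>c\<in>constraints k n s. (\<Prod>j<k. lit_prob n s (\<zeta> j) (c j))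
            * (\<Prod>j<k. (1 + x j * literal_value \<psi> (c j)) / 2))
      = (\<Prod>j<k. \<Sum>l\<in>{..s} \<times> {..<n} \<times> UNIV. lit_prob n s (\<zeta> j) l * ((1 + x j * literal_value \<psi> l) / 2))"
    unfolding constraints_def prod.distrib[symmetric] by (rule prod_sum_PiE[symmetric]) auto
  also have "\<dots> = (\<Prod>j<k. (1 + x j * literal_mean n s \<psi> (\<zeta> j)) / 2)"
    using assms by (intro prod.cong refl sum_lit_prob_affine) auto
  finally show ?thesis .
qed

lemma sum_constraints_prod_lit_prob:
  assumes "s > 0" "n > 0" "\<And>j. j < k \<Longrightarrow> \<bar>\<zeta> j\<bar> \<le> 1"
  shows "(\<Sum>c\<in>constraints k n s. \<Prod>j<k. lit_prob n s (\<zeta> j) (c j)) = 1"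
proof -
  have "(\<Sum>c\<in>constraints k n s. \<Prod>j<k. lit_prob n s (\<zeta> j) (c j))
      = (\<Prod>j<k. \<Sum>l\<in>{..s} \<times> {..<n} \<times> UNIV. lit_prob n s (\<zeta> j) l)"
    unfolding constraints_def by (rule prod_sum_PiE[symmetric]) auto
  also have "\<dots> = 1"
    using assms by (intro prod.neutral ballI sum_lit_prob) auto
  finally show ?thesis .
qed

section \<open>Integrating simple functions against the signed measure\<close>

lemma (in finite_measure) integral_finite_valued:
  fixes g :: "'a \<Rightarrow> real"
  assumes g: "g \<in> borel_measurable M" and V: "finite V" "\<And>x. x \<in> space M \<Longrightarrow> g x \<in> V"
  shows "(\<integral>x. g x \<partial>M) = (\<Sum>v\<in>V. v * measure M {x \<in> space M. g x = v})"
proof -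
  have sets: "{x \<in> space M. g x = v} \<in> sets M" for v
    using g by measurable
  have "(\<integral>x. g x \<partial>M) = (\<integral>x. (\<Sum>v\<in>V. v * indicator {x \<in> space M. g x = v} x) \<partial>M)"
  proof (rule Bochner_Integration.integral_cong[OF refl])
    fix x assume "x \<in> space M"
    then show "g x = (\<Sum>v\<in>V. v * indicator {x \<in> space M. g x = v} x)"
      using V by (simp add: indicator_def if_distrib sum.delta' cong: if_cong)
  qed
  also have "\<dots> = (\<Sum>v\<in>V. v * measure M {x \<in> space M. g x = v})"
    using sets by (subst Bochner_Integration.integral_sum)
      (auto intro!: integrable_real_indicator simp: less_top[symmetric])
  finally show ?thesis .
qed

lemma sum_mult_swap_nested:
  fixes a :: "'s \<Rightarrow> 'p \<Rightarrow> 'b \<Rightarrow> real" and \<mu> :: "real \<Rightarrow> 's \<Rightarrow> 'p \<Rightarrow> 'b \<Rightarrow> real"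
  assumes "finite V"
  shows "(\<Sum>v\<in>V. v * ((\<Sum>S\<in>A. (\<Sum>\<pi>\<in>B S. (\<Sum>b\<in>C S. a S \<pi> b * \<mu> v S \<pi> b) / x) / y S) / z))
       = (\<Sum>S\<in>A. (\<Sum>\<pi>\<in>B S. (\<Sum>b\<in>C S. a S \<pi> b * (\<Sum>v\<in>V. v * \<mu> v S \<pi> b)) / x) / y S) / z"
proof -
  have "(\<Sum>v\<in>V. v * ((\<Sum>S\<in>A. (\<Sum>\<pi>\<in>B S. (\<Sum>b\<in>C S. a S \<pi> b * \<mu> v S \<pi> b) / x) / y S) / z))
      = (\<Sum>v\<in>V. \<Sum>S\<in>A. \<Sum>\<pi>\<in>B S. \<Sum>b\<in>C S. v * (a S \<pi> b * \<mu> v S \<pi> b) / x / y S / z)"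
    by (simp add: sum_distrib_left sum_divide_distrib)
  also have "\<dots> = (\<Sum>S\<in>A. \<Sum>\<pi>\<in>B S. \<Sum>b\<in>C S. \<Sum>v\<in>V. v * (a S \<pi> b * \<mu> v S \<pi> b) / x / y S / z)"
    by (subst sum.swap, rule sum.cong[OF refl], subst sum.swap, rule sum.cong[OF refl], rule sum.swap)
  also have "\<dots> = (\<Sum>S\<in>A. (\<Sum>\<pi>\<in>B S. (\<Sum>b\<in>C S. a S \<pi> b * (\<Sum>v\<in>V. v * \<mu> v S \<pi> b)) / x) / y S) / z"
    by (simp add: sum_distrib_left sum_divide_distrib mult_ac)
  finally show ?thesis .
qed

lemma prod_literal_mean_proj_vec:
  assumes S: "finite S" and \<pi>: "\<pi> permutes S" and b: "b \<in> PiE S (\<lambda>_. {-1, 1})"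
  shows "(\<Prod>i<card S. literal_mean n s \<psi> (proj_vec S \<pi> b \<zeta> i))
       = (\<Prod>x\<in>S. b x) * (\<Prod>j\<in>S. literal_mean n s \<psi> (\<zeta> j))"
proof -
  define l where "l = sorted_list_of_set S"
  have "bij_betw ((!) l) {..<card S} S"
    by (rule bij_betw_nth) (use S in \<open>auto simp: l_def\<close>)
  then have "(\<Prod>i<card S. literal_mean n s \<psi> (proj_vec S \<pi> b \<zeta> i))
      = (\<Prod>x\<in>S. literal_mean n s \<psi> (b x * \<zeta> (\<pi> x)))"
    by (subst prod.reindex_bij_betw[symmetric]) (auto simp: proj_vec_def l_def Let_def)
  also have "\<dots> = (\<Prod>x\<in>S. b x * literal_mean n s \<psi> (\<zeta> (\<pi> x)))"
    using b by (intro prod.cong refl literal_mean_sign_mult) auto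
  also have "\<dots> = (\<Prod>x\<in>S. b x) * (\<Prod>x\<in>S. literal_mean n s \<psi> (\<zeta> (\<pi> x)))"
    by (rule prod.distrib)
  also have "(\<Prod>x\<in>S. literal_mean n s \<psi> (\<zeta> (\<pi> x))) = (\<Prod>j\<in>S. literal_mean n s \<psi> (\<zeta> j))"
    using prod.permute[OF \<pi>, of "\<lambda>j. literal_mean n s \<psi> (\<zeta> j)"] by (simp add: comp_def)
  finally show ?thesis .
qed

lemma prod_sign_square:
  assumes "b \<in> PiE S (\<lambda>_. {-1, 1::real})"
  shows "(\<Prod>x\<in>S. b x) * (\<Prod>x\<in>S. b x) = 1"
proof -
  have "b x * b x = 1" if "x \<in> S" for x
    using PiE_mem[OF assms that] by auto
  then show ?thesis by (simp add: prod.distrib[symmetric])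
qed

lemma average_over_permutations_and_signs:
  assumes "finite S" "card S = t"
  shows "(\<Sum>\<pi>\<in>{\<pi>. \<pi> permutes S}. (\<Sum>b\<in>PiE S (\<lambda>_. {-1, 1::real}). c) / 2 ^ t) / fact t = (c :: real)"
proof -
  have "card (PiE S (\<lambda>_. {-1, 1::real})) = 2 ^ t"
    using assms by (simp add: card_PiE numeral_2_eq_2)
  moreover have "card {\<pi>. \<pi> permutes S} = fact t"
    using card_permutations[OF assms(2,1)] .
  ultimately show ?thesis by simp
qed

section \<open>Assignments relevant to the instance\<close>

text \<open>Constraints only read the variables in \<open>R\<close>, so these finitely many assignments represent
  all \<open>\<plusminus>1\<close> assignments.\<close>
definition assignments_on :: "(nat \<times> nat) set \<Rightarrow> (nat \<times> nat \<Rightarrow> real) set" where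
  "assignments_on R = (\<lambda>g x. if x \<in> R then g x else 1) ` PiE R (\<lambda>_. {-1, 1})"

lemma finite_assignments_on:
  assumes "finite R"
  shows "finite (assignments_on R)"
  unfolding assignments_on_def by (intro finite_imageI finite_PiE assms) auto

lemma card_assignments_on_le:
  assumes "finite R"
  shows "card (assignments_on R) \<le> 2 ^ card R"
  unfolding assignments_on_def using assms
  by (intro order.trans[OF card_image_le]) (simp_all add: card_PiE numeral_2_eq_2 finite_PiE)

lemma assignments_on_values: "\<psi> \<in> assignments_on R \<Longrightarrow> \<psi> x \<in> {-1, 1}"
  unfolding assignments_on_def by (auto simp: PiE_mem)

lemma assignments_on_agree:
  assumes "\<forall>x. \<psi> x \<in> {-1, 1}"
  obtains \<psi>' where "\<psi>' \<in> assignments_on R" "\<And>x. x \<in> R \<Longrightarrow> \<psi>' x = \<psi> x"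
proof
  have "restrict \<psi> R \<in> PiE R (\<lambda>_. {-1, 1})"
    unfolding restrict_PiE_iff using assms by blast
  then show "(\<lambda>x. if x \<in> R then restrict \<psi> R x else 1) \<in> assignments_on R"
    unfolding assignments_on_def by (rule imageI)
qed simp

lemma satisfied_cong:
  assumes "c \<in> constraints k n s" "\<And>x. x \<in> {..s} \<times> {..<n} \<Longrightarrow> \<psi>' x = \<psi> x"
  shows "satisfied k f \<psi>' c = satisfied k f \<psi> c"
proof -
  have "(case c j of (i, v, neg) \<Rightarrow> (if neg then -1 else 1) * \<psi>' (i, v))
      = (case c j of (i, v, neg) \<Rightarrow> (if neg then -1 else 1) * \<psi> (i, v))" if "j < k" for j
  proof -
    have "c j \<in> {..s} \<times> {..<n} \<times> UNIV"
      using assms(1) that by (auto simp: constraints_def)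
    then show ?thesis using assms(2) by (auto split: prod.splits)
  qed
  then show ?thesis
    unfolding satisfied_def by (intro arg_cong[where f=f] restrict_ext) auto
qed

lemma pow2_mult_exp_le:
  assumes "real a * ln 2 + 1 \<le> b"
  shows "2 ^ (a * n) * exp (- b * real n) \<le> exp (- real n)"
proof -
  have "(2::real) ^ (a * n) = exp (real (a * n) * ln 2)"
    using exp_of_nat_mult[of "a * n" "ln (2::real)"] by simp
  then have "2 ^ (a * n) * exp (- b * real n) = exp (real n * (real a * ln 2 - b))"
    by (simp add: mult_exp_exp algebra_simps)
  also have "\<dots> \<le> exp (real n * (- 1))"
    using assms by (intro exp_mono mult_left_mono) auto
  finally show ?thesis by simp
qed

section \<open>The random instance\<close>

locale random_csp = prob_space M for M :: "(nat \<Rightarrow> real) measure" +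
  fixes k n s :: nat
  assumes sets_eq: "sets M = sets (PiM {..<k} (\<lambda>_. borel))"
    and coordinates_bounded: "AE \<zeta> in M. \<forall>j<k. \<bar>\<zeta> j\<bar> \<le> 1"
    and s_pos: "s > 0" and n_pos: "n > 0"
begin

lemma measurable_coordinate [measurable]:
  assumes "j < k"
  shows "(\<lambda>\<zeta>. \<zeta> j) \<in> borel_measurable M"
proof -
  have "(\<lambda>\<zeta>. \<zeta> j) \<in> measurable (PiM {..<k} (\<lambda>_. borel)) borel"
    using assms by (intro measurable_component_singleton) simp
  then show ?thesis using measurable_cong_sets[OF sets_eq refl, of borel] by blast
qed

lemma measurable_prod_lit_prob [measurable]:
  "(\<lambda>\<zeta>. \<Prod>j<k. lit_prob n s (\<zeta> j) (c j)) \<in> borel_measurable M"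
  by (intro borel_measurable_prod measurable_compose[OF measurable_coordinate measurable_lit_prob[OF s_pos]]) auto

lemma integrable_prod_lit_prob: "integrable M (\<lambda>\<zeta>. \<Prod>j<k. lit_prob n s (\<zeta> j) (c j))"
proof (rule integrable_const_bound[where B=1])
  show "AE \<zeta> in M. norm (\<Prod>j<k. lit_prob n s (\<zeta> j) (c j)) \<le> 1"
    using lit_prob_nonneg lit_prob_le_1[OF n_pos] by (intro AE_I2) (simp add: abs_prod prod_le_1)
qed simp

lemma constraint_prob_nonneg: "0 \<le> constraint_prob k M n s c"
  unfolding constraint_prob_def by (intro integral_nonneg_AE AE_I2 prod_nonneg lit_prob_nonneg)

lemma sum_constraint_prob: "(\<Sum>c\<in>constraints k n s. constraint_prob k M n s c) = 1"
proof -
  have "(\<Sum>c\<in>constraints k n s. constraint_prob k M n s c)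
      = (\<integral>\<zeta>. (\<Sum>c\<in>constraints k n s. \<Prod>j<k. lit_prob n s (\<zeta> j) (c j)) \<partial>M)"
    unfolding constraint_prob_def using integrable_prod_lit_prob
    by (subst Bochner_Integration.integral_sum) auto
  also have "\<dots> = (\<integral>\<zeta>. 1 \<partial>M)"
    using coordinates_bounded
    by (intro integral_cong_AE) (auto elim!: eventually_mono intro: sum_constraints_prod_lit_prob[OF s_pos n_pos])
  finally show ?thesis by (simp add: prob_space)
qed

sublocale constraints: finite_distribution "constraints k n s" "constraint_prob k M n s"
  using finite_constraints constraint_prob_nonneg sum_constraint_prob by unfold_locales

lemma instance_prob_eq_iid_prob: "instance_prob k M n s m E = constraints.iid_prob m E"
  by (simp add: instance_prob_def constraints.iid_prob_def)

lemma measurable_prod_literal_mean [measurable]: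
  "S \<subseteq> {..<k} \<Longrightarrow> (\<lambda>\<zeta>. \<Prod>j\<in>S. literal_mean n s \<psi> (\<zeta> j)) \<in> borel_measurable M"
  by (intro borel_measurable_prod measurable_compose[OF measurable_coordinate measurable_literal_mean[OF s_pos]])
    auto

lemma integrable_prod_literal_mean:
  assumes "\<forall>x. \<psi> x \<in> {-1, 1}" "S \<subseteq> {..<k}"
  shows "integrable M (\<lambda>\<zeta>. \<Prod>j\<in>S. literal_mean n s \<psi> (\<zeta> j))"
proof (rule integrable_const_bound[where B=1])
  show "AE \<zeta> in M. norm (\<Prod>j\<in>S. literal_mean n s \<psi> (\<zeta> j)) \<le> 1"
    using abs_literal_mean_le_1[OF assms(1) n_pos] by (intro AE_I2) (simp add: abs_prod prod_le_1)
qed (use assms(2) in simp)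

lemma mean_satisfied_eq_fourier:
  assumes psi: "\<forall>x. \<psi> x \<in> {-1, 1}"
  shows "constraints.mean (\<lambda>c. of_bool (satisfied k f \<psi> c))
    = (\<Sum>S\<in>Pow {..<k}. fhat k f S * (\<integral>\<zeta>. (\<Prod>j\<in>S. literal_mean n s \<psi> (\<zeta> j)) \<partial>M))"
proof -
  define P where "P = (\<lambda>x c. \<Prod>j<k. (1 + x j * literal_value \<psi> (c j)) / 2)"
  define g where "g = (\<lambda>c \<zeta>. \<Prod>j<k. lit_prob n s (\<zeta> j) (c j))"
  have "constraints.mean (\<lambda>c. of_bool (satisfied k f \<psi> c))
      = (\<Sum>c\<in>constraints k n s. \<integral>\<zeta>. g c \<zeta> * (\<Sum>x\<in>cube k. of_bool (f x) * P x c) \<partial>M)"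
    by (simp add: constraints.mean_def constraint_prob_def g_def P_def satisfied_eq_sum_cube[OF psi])
  also have "\<dots> = (\<integral>\<zeta>. (\<Sum>c\<in>constraints k n s. g c \<zeta> * (\<Sum>x\<in>cube k. of_bool (f x) * P x c)) \<partial>M)"
    using integrable_prod_lit_prob by (subst Bochner_Integration.integral_sum) (auto simp: g_def)
  also have "\<dots> = (\<integral>\<zeta>. (\<Sum>S\<in>Pow {..<k}. fhat k f S * (\<Prod>j\<in>S. literal_mean n s \<psi> (\<zeta> j))) \<partial>M)"
  proof (rule integral_cong_AE)
    show "AE \<zeta> in M. (\<Sum>c\<in>constraints k n s. g c \<zeta> * (\<Sum>x\<in>cube k. of_bool (f x) * P x c))
        = (\<Sum>S\<in>Pow {..<k}. fhat k f S * (\<Prod>j\<in>S. literal_mean n s \<psi> (\<zeta> j)))"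
      using coordinates_bounded
    proof (rule eventually_mono)
      fix \<zeta> :: "nat \<Rightarrow> real" assume \<zeta>: "\<forall>j<k. \<bar>\<zeta> j\<bar> \<le> 1"
      have "(\<Sum>c\<in>constraints k n s. g c \<zeta> * (\<Sum>x\<in>cube k. of_bool (f x) * P x c))
          = (\<Sum>x\<in>cube k. of_bool (f x) * (\<Sum>c\<in>constraints k n s. g c \<zeta> * P x c))"
        by (simp add: sum_distrib_left sum_distrib_right mult_ac) (rule sum.swap)
      also have "\<dots> = (\<Sum>x\<in>cube k. of_bool (f x) * (\<Prod>j<k. (1 + x j * literal_mean n s \<psi> (\<zeta> j)) / 2))"
        using sum_constraints_prod_lit_prob_affine[OF s_pos n_pos] \<zeta> by (simp add: g_def P_def)
      also have "\<dots> = (\<Sum>S\<in>Pow {..<k}. fhat k f S * (\<Prod>j\<in>S. literal_mean n s \<psi> (\<zeta> j)))"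
        by (rule sum_cube_prod_affine_eq_fourier)
      finally show "(\<Sum>c\<in>constraints k n s. g c \<zeta> * (\<Sum>x\<in>cube k. of_bool (f x) * P x c))
          = (\<Sum>S\<in>Pow {..<k}. fhat k f S * (\<Prod>j\<in>S. literal_mean n s \<psi> (\<zeta> j)))" .
    qed
  qed (auto simp: g_def)
  also have "\<dots> = (\<Sum>S\<in>Pow {..<k}. fhat k f S * (\<integral>\<zeta>. (\<Prod>j\<in>S. literal_mean n s \<psi> (\<zeta> j)) \<partial>M))"
    using integrable_prod_literal_mean[OF psi] by (subst Bochner_Integration.integral_sum) auto
  finally show ?thesis .
qed

lemma measurable_proj_vec:
  assumes S: "S \<subseteq> {..<k}" and \<pi>: "\<pi> permutes S"
  shows "proj_vec S \<pi> b \<in> measurable M (PiM {..<card S} (\<lambda>_. borel))"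
proof -
  have fin: "finite S" using S finite_subset by blast
  have "\<pi> (sorted_list_of_set S ! j) < k" if "j < card S" for j
  proof -
    have "sorted_list_of_set S ! j \<in> S"
      using fin that by (metis length_sorted_list_of_set nth_mem set_sorted_list_of_set)
    then have "\<pi> (sorted_list_of_set S ! j) \<in> S" by (simp add: permutes_in_image[OF \<pi>])
    then show ?thesis using S by auto
  qed
  then show ?thesis
    unfolding proj_vec_def[abs_def] Let_def by (intro measurable_restrict) auto
qed

lemma sum_range_mult_signed_avg:
  assumes F: "F \<in> borel_measurable (PiM {..<t} (\<lambda>_. borel))" and fin: "finite (range F)"
  shows "(\<Sum>v\<in>range F. v * signed_avg k f M t (F -` {v} \<inter> space (PiM {..<t} (\<lambda>_. borel))))
    = (\<Sum>S\<in>{S. S \<subseteq> {..<k} \<and> card S = t}. (\<Sum>\<pi>\<in>{\<pi>. \<pi> permutes S}. (\<Sum>b\<in>PiE S (\<lambda>_. {-1, 1}).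
         (\<Prod>i\<in>S. b i) * fhat k f S * (\<integral>\<zeta>. F (proj_vec S \<pi> b \<zeta>) \<partial>M)) / 2 ^ t) / fact t)
       / real (k choose t)"
proof -
  let ?P = "PiM {..<t} (\<lambda>_. borel :: real measure)"
  have "(\<integral>\<zeta>. F (proj_vec S \<pi> b \<zeta>) \<partial>M)
      = (\<Sum>v\<in>range F. v * measure M {\<zeta> \<in> space M. proj_vec S \<pi> b \<zeta> \<in> F -` {v} \<inter> space ?P})"
    if S: "S \<subseteq> {..<k}" "card S = t" and \<pi>: "\<pi> permutes S" for S \<pi> b
  proof -
    have proj: "proj_vec S \<pi> b \<in> measurable M ?P"
      using measurable_proj_vec[OF S(1) \<pi>] S(2) by simp
    have "(\<integral>\<zeta>. F (proj_vec S \<pi> b \<zeta>) \<partial>M)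
        = (\<Sum>v\<in>range F. v * measure M {\<zeta> \<in> space M. F (proj_vec S \<pi> b \<zeta>) = v})"
      using measurable_comp[OF proj F] fin by (intro integral_finite_valued) (auto simp: comp_def)
    also have "\<dots> = (\<Sum>v\<in>range F. v * measure M {\<zeta> \<in> space M. proj_vec S \<pi> b \<zeta> \<in> F -` {v} \<inter> space ?P})"
      using measurable_space[OF proj] by (intro sum.cong refl arg_cong2[where f="(*)"] arg_cong[where f="measure M"])
        auto
    finally show ?thesis .
  qed
  then show ?thesis
    unfolding signed_avg_def sum_mult_swap_nested[OF fin]
    by (intro sum.cong refl arg_cong2[where f="(/)"] arg_cong2[where f="(*)"]) auto
qed

lemma fourier_level_vanishes:
  assumes psi: "\<forall>x. \<psi> x \<in> {-1, 1}" and t: "t \<in> {1..k}"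
    and vanish: "\<forall>A\<in>sets (PiM {..<t} (\<lambda>_. borel)). signed_avg k f M t A = 0"
  shows "(\<Sum>S\<in>{S. S \<subseteq> {..<k} \<and> card S = t}.
           fhat k f S * (\<integral>\<zeta>. (\<Prod>j\<in>S. literal_mean n s \<psi> (\<zeta> j)) \<partial>M)) = 0"
proof -
  let ?P = "PiM {..<t} (\<lambda>_. borel :: real measure)"
  define F where "F = (\<lambda>y::nat \<Rightarrow> real. \<Prod>i<t. literal_mean n s \<psi> (y i))"
  define I where "I = (\<lambda>S. \<integral>\<zeta>. (\<Prod>j\<in>S. literal_mean n s \<psi> (\<zeta> j)) \<partial>M)"
  have F_meas: "F \<in> borel_measurable ?P"
    unfolding F_def using measurable_literal_mean[OF s_pos] by measurable
  have "range F \<subseteq> (\<lambda>g. \<Prod>i<t. g i) ` PiE {..<t} (\<lambda>_. range (literal_mean n s \<psi>))"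
  proof
    fix v assume "v \<in> range F"
    then obtain y where "v = F y" by blast
    then have "v = (\<Prod>i<t. restrict (\<lambda>i. literal_mean n s \<psi> (y i)) {..<t} i)"
      by (simp add: F_def)
    moreover have "restrict (\<lambda>i. literal_mean n s \<psi> (y i)) {..<t} \<in> PiE {..<t} (\<lambda>_. range (literal_mean n s \<psi>))"
      by auto
    ultimately show "v \<in> (\<lambda>g. \<Prod>i<t. g i) ` PiE {..<t} (\<lambda>_. range (literal_mean n s \<psi>))"
      by blast
  qed
  then have fin: "finite (range F)"
    by (rule finite_subset) (intro finite_imageI finite_PiE finite_range_literal_mean[OF s_pos]; simp)
  text \<open>Integrate \<open>F\<close> against the vanishing signed measure; as \<open>literal_mean\<close> is odd, the
    signs \<open>b\<close> cancel against the factor \<open>\<Prod>i\<in>S. b i\<close>.\<close>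
  have "0 = (\<Sum>v\<in>range F. v * signed_avg k f M t (F -` {v} \<inter> space ?P))"
    using vanish measurable_sets[OF F_meas] by simp
  also have "\<dots> = (\<Sum>S\<in>{S. S \<subseteq> {..<k} \<and> card S = t}. (\<Sum>\<pi>\<in>{\<pi>. \<pi> permutes S}.
      (\<Sum>b\<in>PiE S (\<lambda>_. {-1, 1::real}). fhat k f S * I S) / 2 ^ t) / fact t) / real (k choose t)"
  proof -
    have "(\<Prod>i\<in>S. b i) * fhat k f S * (\<integral>\<zeta>. F (proj_vec S \<pi> b \<zeta>) \<partial>M) = fhat k f S * I S"
      if "S \<subseteq> {..<k}" "card S = t" "\<pi> permutes S" "b \<in> PiE S (\<lambda>_. {-1, 1})" for S \<pi> b
      using prod_literal_mean_proj_vec[OF finite_subset[OF that(1)] that(3,4)] prod_sign_square[OF that(4)] that(2)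
      by (simp add: F_def I_def mult.assoc[symmetric])
    then show ?thesis
      unfolding sum_range_mult_signed_avg[OF F_meas fin]
      by (intro sum.cong refl arg_cong2[where f="(/)"]) auto
  qed
  also have "\<dots> = (\<Sum>S\<in>{S. S \<subseteq> {..<k} \<and> card S = t}. fhat k f S * I S) / real (k choose t)"
    by (intro arg_cong2[where f="(/)"] sum.cong refl average_over_permutations_and_signs)
      (auto intro: finite_subset)
  finally show ?thesis
    using t by (simp add: I_def)
qed

lemma mean_satisfied_eq_rho:
  assumes psi: "\<forall>x. \<psi> x \<in> {-1, 1}"
    and vanish: "\<forall>t\<in>{1..k}. \<forall>A\<in>sets (PiM {..<t} (\<lambda>_. borel)). signed_avg k f M t A = 0"
  shows "constraints.mean (\<lambda>c. of_bool (satisfied k f \<psi> c)) = rho k f"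
proof -
  define h where "h = (\<lambda>S. fhat k f S * (\<integral>\<zeta>. (\<Prod>j\<in>S. literal_mean n s \<psi> (\<zeta> j)) \<partial>M))"
  define level where "level = (\<lambda>t. \<Sum>S\<in>{S. S \<subseteq> {..<k} \<and> card S = t}. h S)"
  have "constraints.mean (\<lambda>c. of_bool (satisfied k f \<psi> c)) = (\<Sum>S\<in>Pow {..<k}. h S)"
    unfolding h_def by (rule mean_satisfied_eq_fourier[OF psi])
  also have "\<dots> = (\<Sum>t\<le>k. level t)"
    unfolding level_def using sum.group[of "Pow {..<k}" "{..k}" card h]
    by (simp add: card_mono[of "{..<k}", simplified] image_subset_iff conj_commute)
  also have "\<dots> = level 0 + (\<Sum>t\<in>{1..k}. level t)"
    by (simp add: atMost_atLeast0 sum.atLeast_Suc_atMost)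
  also have "(\<Sum>t\<in>{1..k}. level t) = 0"
    using fourier_level_vanishes[OF psi] vanish by (simp add: level_def h_def)
  finally have "constraints.mean (\<lambda>c. of_bool (satisfied k f \<psi> c)) = level 0"
    by simp
  also have "{S. S \<subseteq> {..<k} \<and> card S = 0} = {{}}"
    by (auto dest: finite_subset[OF _ finite_lessThan])
  then have "level 0 = h {}"
    by (simp add: level_def)
  finally show ?thesis
    by (simp add: h_def fhat_empty prob_space)
qed

lemma iid_prob_sat_near_rho:
  assumes vanish: "\<forall>t\<in>{1..k}. \<forall>A\<in>sets (PiM {..<t} (\<lambda>_. borel)). signed_avg k f M t A = 0"
    and e: "e > 0" and m: "m > 0"
  shows "1 - 2 * 2 ^ ((s + 1) * n) * exp (- 2 * real m * e\<^sup>2)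
    \<le> constraints.iid_prob m (\<lambda>\<Phi>. \<forall>\<psi>. (\<forall>x. \<psi> x \<in> {-1, 1}) \<longrightarrow>
          sat k f \<Phi> \<psi> \<in> {rho k f - e .. rho k f + e})"
proof -
  define R where "R = {..s} \<times> {..<n}"
  define X where "X = (\<lambda>\<psi> c. of_bool (satisfied k f \<psi> c) :: real)"
  define deviates where "deviates = (\<lambda>\<psi> \<Phi>. (\<Sum>c\<leftarrow>\<Phi>. X \<psi> c) / real m
      \<notin> {constraints.mean (X \<psi>) - e .. constraints.mean (X \<psi>) + e})"
  have finite_R: "finite R" and card_R: "card R = (s + 1) * n"
    by (simp_all add: R_def card_cartesian_product)
  have "constraints.iid_prob m (\<lambda>\<Phi>. \<not> (\<forall>\<psi>. (\<forall>x. \<psi> x \<in> {-1, 1}) \<longrightarrow>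
          sat k f \<Phi> \<psi> \<in> {rho k f - e .. rho k f + e}))
      \<le> constraints.iid_prob m (\<lambda>\<Phi>. \<exists>\<psi>\<in>assignments_on R. deviates \<psi> \<Phi>)"
  proof (rule constraints.iid_prob_mono)
    fix \<Phi> assume \<Phi>: "set \<Phi> \<subseteq> constraints k n s" "length \<Phi> = m"
      and "\<not> (\<forall>\<psi>. (\<forall>x. \<psi> x \<in> {-1, 1}) \<longrightarrow> sat k f \<Phi> \<psi> \<in> {rho k f - e .. rho k f + e})"
    then obtain \<psi> where psi: "\<forall>x. \<psi> x \<in> {-1, 1}" and far: "sat k f \<Phi> \<psi> \<notin> {rho k f - e .. rho k f + e}"
      by blast
    obtain \<psi>' where \<psi>': "\<psi>' \<in> assignments_on R" "\<And>x. x \<in> R \<Longrightarrow> \<psi>' x = \<psi> x"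
      using assignments_on_agree[OF psi] by blast
    have "sat k f \<Phi> \<psi> = (\<Sum>c\<leftarrow>\<Phi>. X \<psi>' c) / real m"
      using \<Phi> satisfied_cong[of _ k n s \<psi>' \<psi> f] \<psi>'(2)
      unfolding sat_def X_def R_def by (intro arg_cong2[where f="(/)"] arg_cong[where f=sum_list] map_cong) auto
    moreover have "constraints.mean (X \<psi>') = rho k f"
      unfolding X_def using assignments_on_values[OF \<psi>'(1)] vanish by (intro mean_satisfied_eq_rho) auto
    ultimately have "deviates \<psi>' \<Phi>"
      using far unfolding deviates_def by simp
    then show "\<exists>\<psi>\<in>assignments_on R. deviates \<psi> \<Phi>"
      using \<psi>'(1) by blast
  qed
  also have "\<dots> \<le> (\<Sum>\<psi>\<in>assignments_on R. constraints.iid_prob m (deviates \<psi>))"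
    by (rule constraints.iid_prob_union_bound[OF finite_assignments_on[OF finite_R]])
  also have "\<dots> \<le> (\<Sum>\<psi>\<in>assignments_on R. 2 * exp (- 2 * real m * e\<^sup>2))"
    unfolding deviates_def X_def using e m by (intro sum_mono constraints.iid_prob_mean_deviation) auto
  also have "\<dots> \<le> 2 ^ ((s + 1) * n) * (2 * exp (- 2 * real m * e\<^sup>2))"
    using card_assignments_on_le[OF finite_R] unfolding card_R
    by (simp del: of_nat_power add: of_nat_power[symmetric] mult_right_mono)
  finally show ?thesis
    unfolding constraints.iid_prob_not by (simp add: mult_ac)
qed

lemma instance_prob_near_rho_bounds:
  assumes vanish: "\<forall>t\<in>{1..k}. \<forall>A\<in>sets (PiM {..<t} (\<lambda>_. borel)). signed_avg k f M t A = 0"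
    and e: "e > 0" and \<Delta>: "real (s + 1) * ln 2 + 1 \<le> 2 * real \<Delta> * e\<^sup>2" "\<Delta> > 0"
  defines "P \<equiv> instance_prob k M n s (\<Delta> * n)
    (\<lambda>\<Phi>. \<forall>\<psi>. (\<forall>x. \<psi> x \<in> {-1, 1}) \<longrightarrow> sat k f \<Phi> \<psi> \<in> {rho k f - e .. rho k f + e})"
  shows "1 - 2 * exp (- real n) \<le> P \<and> P \<le> 1"
proof
  have "2 * 2 ^ ((s + 1) * n) * exp (- 2 * real (\<Delta> * n) * e\<^sup>2) \<le> 2 * exp (- real n)"
    using pow2_mult_exp_le[OF \<Delta>(1), of n] by (simp add: mult_ac)
  then show "1 - 2 * exp (- real n) \<le> P"
    using iid_prob_sat_near_rho[OF vanish e, of "\<Delta> * n"] n_pos \<Delta>(2)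
    by (simp add: P_def instance_prob_eq_iid_prob)
  show "P \<le> 1"
    by (simp add: P_def instance_prob_eq_iid_prob constraints.iid_prob_le_1)
qed

end

lemma Cstar_abs_le_1:
  assumes "\<zeta> \<in> Cstar k f" "j < k"
  shows "\<bar>\<zeta> j\<bar> \<le> 1"
proof -
  obtain \<nu> :: "(nat \<Rightarrow> real) pmf" where \<nu>: "set_pmf \<nu> \<subseteq> {x \<in> cube k. f x}"
    and \<zeta>: "\<zeta> j = measure_pmf.expectation \<nu> (\<lambda>x. x j)"
    using assms unfolding Cstar_def by blast
  have "\<bar>x j\<bar> \<le> 1" if "x \<in> set_pmf \<nu>" for x
  proof -
    have "x \<in> PiE {..<k} (\<lambda>_. {-1, 1})" using \<nu> that by (auto simp: cube_def)
    then have "x j \<in> {-1, 1}" using \<open>j < k\<close> by (auto dest: PiE_mem)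
    then show ?thesis by auto
  qed
  then have "\<bar>\<zeta> j\<bar> \<le> measure_pmf.expectation \<nu> (\<lambda>_. 1::real)"
    unfolding \<zeta> by (intro order.trans[OF integral_abs_bound] integral_mono_AE)
      (auto simp: AE_measure_pmf_iff intro!: measure_pmf.integrable_const_bound[where B=1])
  then show ?thesis by simp
qed

lemma Cstar_delta_abs_le_1:
  assumes "\<zeta> \<in> Cstar_delta k f \<delta>" "0 < \<delta>" "\<delta> < 1" "j < k"
  shows "\<bar>\<zeta> j\<bar> \<le> 1"
proof -
  obtain \<zeta>' where "\<zeta>' \<in> Cstar k f" and "\<zeta> = (\<lambda>j\<in>{..<k}. (1 - \<delta>) * \<zeta>' j)"
    using assms(1) unfolding Cstar_delta_def by blast
  then show ?thesis
    using Cstar_abs_le_1[of \<zeta>' k f j] assms(2-4) by (simp add: abs_mult mult_le_one)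
qed

lemma exists_pos_nat_ge:
  assumes "e > 0"
  obtains \<Delta> :: nat where "c \<le> 2 * real \<Delta> * e\<^sup>2" "\<Delta> > 0"
proof
  define \<Delta> where "\<Delta> = nat \<lceil>c / (2 * e\<^sup>2)\<rceil> + 1"
  have "c / (2 * e\<^sup>2) \<le> real \<Delta>"
    unfolding \<Delta>_def by linarith
  then show "c \<le> 2 * real \<Delta> * e\<^sup>2"
    using assms by (simp add: pos_divide_le_eq mult_ac)
  show "\<Delta> > 0" by (simp add: \<Delta>_def)
qed

lemma tendsto_one_if_exp_bounds:
  fixes Q :: "nat \<Rightarrow> real"
  assumes "\<And>n. n > 0 \<Longrightarrow> 1 - 2 * exp (- real n) \<le> Q n \<and> Q n \<le> 1"
  shows "Q \<longlonglongrightarrow> 1"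
proof (rule tendsto_sandwich[OF _ _ _ tendsto_const])
  have "(\<lambda>n. exp (- real n)) \<longlonglongrightarrow> 0"
    by (intro filterlim_compose[OF exp_at_bot] filterlim_compose[OF filterlim_uminus_at_bot_at_top]
        filterlim_real_sequentially)
  then have "(\<lambda>n. 1 - 2 * exp (- real n)) \<longlonglongrightarrow> 1 - 2 * 0"
    by (intro tendsto_intros)
  then show "(\<lambda>n. 1 - 2 * exp (- real n)) \<longlonglongrightarrow> 1"
    by simp
  show "\<forall>\<^sub>F n in sequentially. 1 - 2 * exp (- real n) \<le> Q n" "\<forall>\<^sub>F n in sequentially. Q n \<le> 1"
    using assms by (auto intro!: eventually_sequentiallyI[of 1])
qed

theorem mainTheorem11:
  fixes k :: nat and f :: "(nat \<Rightarrow> real) \<Rightarrow> bool" and \<delta> :: real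
    and \<Lambda> :: "(nat \<Rightarrow> real) measure"
  assumes "0 < \<delta>" and "\<delta> < 1"
    and "prob_space \<Lambda>"
    and "sets \<Lambda> = sets (PiM {..<k} (\<lambda>_. borel))"
    and "AE \<zeta> in \<Lambda>. \<zeta> \<in> Cstar_delta k f \<delta>"
    and "\<forall>t\<in>{1..k}. \<forall>A\<in>sets (PiM {..<t} (\<lambda>_. borel)). signed_avg k f \<Lambda> t A = 0"
  shows "\<forall>\<epsilon>>0. \<exists>\<Delta>::nat. \<Delta> > 0 \<and>
     (\<lambda>n. instance_prob k \<Lambda> n (nat \<lceil>1 / \<epsilon>\<rceil>) (\<Delta> * n)
        (\<lambda>\<Phi>. \<forall>\<psi> :: nat \<times> nat \<Rightarrow> real. (\<forall>x. \<psi> x \<in> {-1, 1}) \<longrightarrow>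
           sat k f \<Phi> \<psi> \<in> {rho k f - \<epsilon> .. rho k f + \<epsilon>}))
     \<longlonglongrightarrow> 1"
proof (intro allI impI)
  fix \<epsilon> :: real assume \<epsilon>: "\<epsilon> > 0"
  define s where "s = nat \<lceil>1 / \<epsilon>\<rceil>"
  have "s > 0" using \<epsilon> by (simp add: s_def)
  obtain \<Delta> :: nat where \<Delta>: "real (s + 1) * ln 2 + 1 \<le> 2 * real \<Delta> * \<epsilon>\<^sup>2" "\<Delta> > 0"
    using exists_pos_nat_ge[OF \<epsilon>] by blast
  have bounded: "AE \<zeta> in \<Lambda>. \<forall>j<k. \<bar>\<zeta> j\<bar> \<le> 1"
    using assms(5) by eventually_elim (use Cstar_delta_abs_le_1 assms(1,2) in blast)
  have "1 - 2 * exp (- real n) \<le> instance_prob k \<Lambda> n s (\<Delta> * n)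
      (\<lambda>\<Phi>. \<forall>\<psi>. (\<forall>x. \<psi> x \<in> {-1, 1}) \<longrightarrow> sat k f \<Phi> \<psi> \<in> {rho k f - \<epsilon> .. rho k f + \<epsilon>})
    \<and> instance_prob k \<Lambda> n s (\<Delta> * n)
      (\<lambda>\<Phi>. \<forall>\<psi>. (\<forall>x. \<psi> x \<in> {-1, 1}) \<longrightarrow> sat k f \<Phi> \<psi> \<in> {rho k f - \<epsilon> .. rho k f + \<epsilon>}) \<le> 1"
    if "n > 0" for n
  proof -
    interpret random_csp \<Lambda> k n s
      by (rule random_csp.intro[OF assms(3)], unfold_locales) (use assms(4) bounded \<open>s > 0\<close> \<open>n > 0\<close> in auto)
    show ?thesis by (rule instance_prob_near_rho_bounds[OF assms(6) \<epsilon> \<Delta>])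
  qed
  then show "\<exists>\<Delta>::nat. \<Delta> > 0 \<and> (\<lambda>n. instance_prob k \<Lambda> n (nat \<lceil>1 / \<epsilon>\<rceil>) (\<Delta> * n)
        (\<lambda>\<Phi>. \<forall>\<psi>. (\<forall>x. \<psi> x \<in> {-1, 1}) \<longrightarrow> sat k f \<Phi> \<psi> \<in> {rho k f - \<epsilon> .. rho k f + \<epsilon>})) \<longlonglongrightarrow> 1"
    unfolding s_def using \<Delta>(2) by (blast intro: tendsto_one_if_exp_bounds)
qed

end
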